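(* For every temporal oriented tree $\mathcal T$, the connectivity graph $G$ of $\mathcal T$ contains no odd hole, i.e., no induced cycle of odd length at least $5$.
   Context: A temporal digraph is a pair $(D,\lambda)$ with $D=(V,A)$ a finite digraph and $\lambda:A\to 2^{\{1,\dots,t_{\max}\}}$ giving the time-steps at which each arc is active. A temporal oriented tree $\mathcal T=(T,\lambda)$ is one whose underlying digraph $T$ is an orientation of a tree. A temporal path is a sequence $(v_1,v_2,t_1),\dots,(v_{k-1},v_k,t_{k-1})$ with pairwise distinct $v_i$, $\overrightarrow{v_iv_{i+1}}\in A$, $t_i\in\lambda(\overrightarrow{v_iv_{i+1}})$ and $t_1<\dots<t_{k-1}$. Two vertices $u\ne v$ are temporally connected if there is a temporal path from $u$ to $v$ or from $v$ to $u$. The connectivity graph of $\mathcal T$ is the undirected graph $G$ with $V(G)=V(T)$ and $uv\in E(G)$ iff $u\neq v$ and $u,v$ are temporally connected. *)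

theory Defs
  imports Main
begin

definition is_cycle :: "'v set \<Rightarrow> ('v \<Rightarrow> 'v \<Rightarrow> bool) \<Rightarrow> 'v list \<Rightarrow> bool" where
  "is_cycle V E cs \<longleftrightarrow> length cs \<ge> 3 \<and> distinct cs \<and> set cs \<subseteq> V \<and>
     (\<forall>i < length cs. E (cs ! i) (cs ! ((i + 1) mod length cs)))"

definition induced_cycle :: "'v set \<Rightarrow> ('v \<Rightarrow> 'v \<Rightarrow> bool) \<Rightarrow> 'v list \<Rightarrow> bool" where
  "induced_cycle V E cs \<longleftrightarrow> is_cycle V E cs \<and>
     (\<forall>i j. i < length cs \<and> j < length cs \<and> E (cs ! i) (cs ! j) \<longrightarrow>
        j = (i + 1) mod length cs \<or> i = (j + 1) mod length cs)"

definition odd_hole :: "'v set \<Rightarrow> ('v \<Rightarrow> 'v \<Rightarrow> bool) \<Rightarrow> 'v list \<Rightarrow> bool" where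
  "odd_hole V E cs \<longleftrightarrow> induced_cycle V E cs \<and> odd (length cs) \<and> length cs \<ge> 5"

definition und :: "('v \<times> 'v) set \<Rightarrow> 'v \<Rightarrow> 'v \<Rightarrow> bool" where
  "und A u v \<longleftrightarrow> (u, v) \<in> A \<or> (v, u) \<in> A"

definition is_tree :: "'v set \<Rightarrow> ('v \<Rightarrow> 'v \<Rightarrow> bool) \<Rightarrow> bool" where
  "is_tree V E \<longleftrightarrow> V \<noteq> {} \<and>
     (\<forall>u\<in>V. \<forall>v\<in>V. (\<lambda>x y. x \<in> V \<and> y \<in> V \<and> E x y)\<^sup>*\<^sup>* u v) \<and>
     \<not> (\<exists>cs. is_cycle V E cs)"

definition oriented_tree :: "'v set \<Rightarrow> ('v \<times> 'v) set \<Rightarrow> bool" where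
  "oriented_tree V A \<longleftrightarrow> A \<subseteq> V \<times> V \<and> (\<forall>u v. (u, v) \<in> A \<longrightarrow> u \<noteq> v \<and> (v, u) \<notin> A) \<and>
     is_tree V (und A)"

definition temporal_path :: "('v \<times> 'v) set \<Rightarrow> ('v \<times> 'v \<Rightarrow> nat set) \<Rightarrow> 'v list \<Rightarrow> nat list \<Rightarrow> bool" where
  "temporal_path A lam vs ts \<longleftrightarrow> length vs \<ge> 2 \<and> length ts = length vs - 1 \<and> distinct vs \<and>
     (\<forall>i < length ts. (vs ! i, vs ! Suc i) \<in> A \<and> ts ! i \<in> lam (vs ! i, vs ! Suc i)) \<and>
     sorted_wrt (<) ts"

definition temp_path_from_to :: "('v \<times> 'v) set \<Rightarrow> ('v \<times> 'v \<Rightarrow> nat set) \<Rightarrow> 'v \<Rightarrow> 'v \<Rightarrow> bool" where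
  "temp_path_from_to A lam u v \<longleftrightarrow>
     (\<exists>vs ts. temporal_path A lam vs ts \<and> hd vs = u \<and> last vs = v)"

definition temporally_connected :: "('v \<times> 'v) set \<Rightarrow> ('v \<times> 'v \<Rightarrow> nat set) \<Rightarrow> 'v \<Rightarrow> 'v \<Rightarrow> bool" where
  "temporally_connected A lam u v \<longleftrightarrow> temp_path_from_to A lam u v \<or> temp_path_from_to A lam v u"

definition conn_graph :: "'v set \<Rightarrow> ('v \<times> 'v) set \<Rightarrow> ('v \<times> 'v \<Rightarrow> nat set) \<Rightarrow> 'v \<Rightarrow> 'v \<Rightarrow> bool" where
  "conn_graph V A lam u v \<longleftrightarrow> u \<in> V \<and> v \<in> V \<and> u \<noteq> v \<and> temporally_connected A lam u v"

end

theory Submission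
  imports Defs "HOL-Library.Transitive_Closure_Table"
begin

text \<open>Orient each edge of an odd hole in the connectivity graph by the direction of a temporal path
realising it. Since the hole is odd, two consecutive edges p q and q r get the same orientation,
say p \<leadsto> q \<leadsto> r. Going the other way round the hole, every edge u v avoids q and q is not
adjacent to both u and v, so no temporal path realising u v passes through q (its two halves would
make q adjacent to both). Hence p and r are joined in the tree minus q. But p reaches q by an arc
x \<rightarrow> q and r is reached from q by an arc q \<rightarrow> y with x \<noteq> y, because the orientation has no
antiparallel arcs; so x and y, two neighbours of q, are joined in the tree minus q, closing a cycle.\<close>

definition delete_vertex :: "'v set \<Rightarrow> ('v \<Rightarrow> 'v \<Rightarrow> bool) \<Rightarrow> 'v \<Rightarrow> 'v \<Rightarrow> 'v \<Rightarrow> bool" where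
  "delete_vertex V E q a b \<longleftrightarrow> a \<in> V - {q} \<and> b \<in> V - {q} \<and> E a b"

lemma symp_und: "symp (und A)"
  by (auto simp: und_def intro: sympI)

lemma delete_vertex_rtranclp_sym:
  assumes "symp E" and "(delete_vertex V E q)\<^sup>*\<^sup>* a b"
  shows "(delete_vertex V E q)\<^sup>*\<^sup>* b a"
proof -
  have "symp (delete_vertex V E q)"
    using assms(1) by (auto simp: delete_vertex_def intro!: sympI dest: sympD)
  then show ?thesis
    using assms(2) by (metis symp_rtranclp sympD)
qed

lemma rtranclp_of_chain:
  assumes "a \<le> b" and "\<And>l. a \<le> l \<Longrightarrow> l < b \<Longrightarrow> r (g l) (g (Suc l))"
  shows "r\<^sup>*\<^sup>* (g a) (g b)"
  using assms by (induction b rule: dec_induct) (auto intro: rtranclp.rtrancl_into_rtrancl)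

lemma rtrancl_path_nth:
  "rtrancl_path r x xs y \<Longrightarrow> i < length xs \<Longrightarrow> r ((x # xs) ! i) (xs ! i)"
  by (induction arbitrary: i rule: rtrancl_path.induct) (auto simp: nth_Cons split: nat.split)

lemma rtrancl_path_last: "rtrancl_path r x xs y \<Longrightarrow> last (x # xs) = y"
  by (induction rule: rtrancl_path.induct) auto

lemma tree_delete_vertex_separates_neighbours:
  assumes tree: "is_tree V E" and z: "z \<in> V" and zx: "E z x" and yz: "E y z" and xy: "x \<noteq> y"
  shows "\<not> (delete_vertex V E z)\<^sup>*\<^sup>* x y"
proof
  assume "(delete_vertex V E z)\<^sup>*\<^sup>* x y"
  then obtain xs where path: "rtrancl_path (delete_vertex V E z) x xs y"
    and dist: "distinct (x # xs)"
    by (meson rtranclp_eq_rtrancl_path rtrancl_path_distinct)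
  have edge: "delete_vertex V E z ((x # xs) ! i) (xs ! i)" if "i < length xs" for i
    using rtrancl_path_nth[OF path that] .
  have "xs \<noteq> []"
    using path xy by (auto elim: rtrancl_path.cases)
  then have "x \<in> V - {z}"
    using edge[of 0] by (simp add: delete_vertex_def)
  moreover have "xs ! i \<in> V - {z}" if "i < length xs" for i
    using edge[OF that] by (simp add: delete_vertex_def)
  ultimately have avoid: "set (x # xs) \<subseteq> V - {z}"
    by (force simp: in_set_conv_nth)
  define cs where "cs = z # x # xs"
  have "is_cycle V E cs"
    unfolding is_cycle_def
  proof (intro conjI allI impI)
    show "3 \<le> length cs" and "distinct cs" and "set cs \<subseteq> V"
      using \<open>xs \<noteq> []\<close> dist avoid z by (auto simp: cs_def Suc_le_eq)
    fix i assume i: "i < length cs"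
    consider "i = 0" | j where "i = Suc j" "j < length xs" | "i = Suc (length xs)"
      using i by (cases i) (auto simp: cs_def less_Suc_eq)
    then show "E (cs ! i) (cs ! ((i + 1) mod length cs))"
    proof cases
      case 1 then show ?thesis using zx by (simp add: cs_def)
    next
      case 2 then show ?thesis using edge by (simp add: cs_def delete_vertex_def)
    next
      case 3
      have "cs ! i = last (x # xs)"
        by (simp add: cs_def 3 last_conv_nth)
      then have "cs ! i = y"
        using rtrancl_path_last[OF path] by simp
      then show ?thesis using yz by (simp add: cs_def 3)
    qed
  qed
  then show False
    using tree by (auto simp: is_tree_def)
qed

lemma temporal_path_hd_last:
  assumes "temporal_path A lam vs ts"
  shows "hd vs = vs ! 0" and "last vs = vs ! (length vs - 1)"
proof -
  have "vs \<noteq> []"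
    using assms by (auto simp: temporal_path_def)
  then show "hd vs = vs ! 0" and "last vs = vs ! (length vs - 1)"
    by (simp_all add: hd_conv_nth last_conv_nth)
qed

lemma temporal_path_split:
  assumes tp: "temporal_path A lam vs ts" and j: "0 < j" "j < length vs - 1"
  shows "temp_path_from_to A lam (hd vs) (vs ! j)" and "temp_path_from_to A lam (vs ! j) (last vs)"
proof -
  have len: "length vs \<ge> 2" "length ts = length vs - 1"
    using tp by (auto simp: temporal_path_def)
  have "temporal_path A lam (take (Suc j) vs) (take j ts)"
    using tp j by (auto simp: temporal_path_def)
  moreover have "hd (take (Suc j) vs) = hd vs"
    using j len by (auto simp: hd_conv_nth)
  moreover have "last (take (Suc j) vs) = vs ! j"
    using j len by (subst last_conv_nth) auto
  ultimately show "temp_path_from_to A lam (hd vs) (vs ! j)"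
    unfolding temp_path_from_to_def by metis
  have "temporal_path A lam (drop j vs) (drop j ts)"
    using tp j by (auto simp: temporal_path_def)
  moreover have "hd (drop j vs) = vs ! j" and "last (drop j vs) = last vs"
    using j len by (auto simp: hd_drop_conv_nth)
  ultimately show "temp_path_from_to A lam (vs ! j) (last vs)"
    unfolding temp_path_from_to_def by metis
qed

lemma temporal_path_delete_vertex_rtranclp:
  assumes tp: "temporal_path A lam vs ts" and AV: "A \<subseteq> V \<times> V"
    and ab: "a \<le> b" "b < length vs" and avoid: "\<And>l. a \<le> l \<Longrightarrow> l \<le> b \<Longrightarrow> vs ! l \<noteq> q"
  shows "(delete_vertex V (und A) q)\<^sup>*\<^sup>* (vs ! a) (vs ! b)"
proof (rule rtranclp_of_chain[where g = "nth vs"])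
  fix l assume l: "a \<le> l" "l < b"
  have "(vs ! l, vs ! Suc l) \<in> A"
    using tp l ab by (auto simp: temporal_path_def)
  then show "delete_vertex V (und A) q (vs ! l) (vs ! Suc l)"
    using AV avoid l by (auto simp: delete_vertex_def und_def)
qed (fact ab)

lemma temp_path_avoiding_vertex:
  assumes AV: "A \<subseteq> V \<times> V" and ab: "temp_path_from_to A lam a b"
    and qa: "q \<noteq> a" and qb: "q \<noteq> b"
    and not_through: "\<not> (temp_path_from_to A lam a q \<and> temp_path_from_to A lam q b)"
  shows "(delete_vertex V (und A) q)\<^sup>*\<^sup>* a b"
proof -
  obtain vs ts where tp: "temporal_path A lam vs ts" and ends: "hd vs = a" "last vs = b"
    using ab by (auto simp: temp_path_from_to_def)
  have len: "length vs \<ge> 2"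
    using tp by (auto simp: temporal_path_def)
  then have ends': "vs ! 0 = a" "vs ! (length vs - 1) = b"
    using ends temporal_path_hd_last[OF tp] by simp_all
  have "vs ! l \<noteq> q" if "l < length vs" for l
  proof
    assume "vs ! l = q"
    then have "l \<noteq> 0" and "l \<noteq> length vs - 1"
      using ends' qa qb by metis+
    then have "0 < l" "l < length vs - 1"
      using that by auto
    then show False
      using temporal_path_split[OF tp] not_through ends \<open>vs ! l = q\<close> by metis
  qed
  then show ?thesis
    using temporal_path_delete_vertex_rtranclp[OF tp AV, of 0 "length vs - 1" q] len ends' by simp
qed

lemma conn_graph_edge_avoiding_vertex:
  assumes AV: "A \<subseteq> V \<times> V" and uv: "conn_graph V A lam u v"
    and q: "q \<in> V" "q \<noteq> u" "q \<noteq> v"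
    and not_both: "\<not> (conn_graph V A lam q u \<and> conn_graph V A lam q v)"
  shows "(delete_vertex V (und A) q)\<^sup>*\<^sup>* u v"
proof -
  have not_through: "\<not> (temp_path_from_to A lam a q \<and> temp_path_from_to A lam q b)"
    if "{a, b} = {u, v}" for a b
    using not_both q that uv by (auto simp: conn_graph_def temporally_connected_def doubleton_eq_iff)
  from uv consider "temp_path_from_to A lam u v" | "temp_path_from_to A lam v u"
    by (auto simp: conn_graph_def temporally_connected_def)
  then show ?thesis
  proof cases
    case 1
    then show ?thesis
      using temp_path_avoiding_vertex[OF AV _ q(2,3) not_through] by blast
  next
    case 2
    then have "(delete_vertex V (und A) q)\<^sup>*\<^sup>* v u"
      using temp_path_avoiding_vertex[OF AV _ q(3,2) not_through] by blast
    then show ?thesis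
      by (rule delete_vertex_rtranclp_sym[OF symp_und])
  qed
qed

lemma temp_path_last_arc:
  assumes AV: "A \<subseteq> V \<times> V" and pq: "temp_path_from_to A lam p q"
  obtains x where "(x, q) \<in> A" and "(delete_vertex V (und A) q)\<^sup>*\<^sup>* p x"
proof -
  obtain vs ts where tp: "temporal_path A lam vs ts" and ends: "hd vs = p" "last vs = q"
    using pq by (auto simp: temp_path_from_to_def)
  define n where "n = length vs"
  have n: "n \<ge> 2" "distinct vs" "\<forall>i < n - 1. (vs ! i, vs ! Suc i) \<in> A"
    using tp by (auto simp: temporal_path_def n_def)
  have ends': "vs ! 0 = p" "vs ! (n - 1) = q"
    using ends temporal_path_hd_last[OF tp] by (simp_all add: n_def)
  have "(vs ! (n - 2), vs ! Suc (n - 2)) \<in> A"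
    using n(1,3) by auto
  then have "(vs ! (n - 2), q) \<in> A"
    using n(1) ends' by (simp add: Suc_diff_Suc numeral_2_eq_2)
  moreover have "(delete_vertex V (und A) q)\<^sup>*\<^sup>* p (vs ! (n - 2))"
  proof -
    have "vs ! l \<noteq> q" if "l \<le> n - 2" for l
    proof -
      have "l < length vs" and "n - 1 < length vs"
        using that n(1) by (auto simp: n_def)
      then show ?thesis
        using that n(1) ends'(2) nth_eq_iff_index_eq[OF n(2), of l "n - 1"] by simp
    qed
    then show ?thesis
      using temporal_path_delete_vertex_rtranclp[OF tp AV, of 0 "n - 2" q] ends' n(1) by (simp add: n_def)
  qed
  ultimately show ?thesis
    by (rule that)
qed

lemma temp_path_first_arc:
  assumes AV: "A \<subseteq> V \<times> V" and qr: "temp_path_from_to A lam q r"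
  obtains y where "(q, y) \<in> A" and "(delete_vertex V (und A) q)\<^sup>*\<^sup>* y r"
proof -
  obtain vs ts where tp: "temporal_path A lam vs ts" and ends: "hd vs = q" "last vs = r"
    using qr by (auto simp: temp_path_from_to_def)
  define n where "n = length vs"
  have n: "n \<ge> 2" "distinct vs" "(vs ! 0, vs ! 1) \<in> A"
    using tp by (auto simp: temporal_path_def n_def)
  have ends': "vs ! 0 = q" "vs ! (n - 1) = r"
    using ends temporal_path_hd_last[OF tp] by (simp_all add: n_def)
  have "vs ! l \<noteq> q" if "1 \<le> l" "l \<le> n - 1" for l
  proof -
    have "l < length vs" and "0 < length vs"
      using that n(1) by (auto simp: n_def)
    then show ?thesis
      using that ends'(1) nth_eq_iff_index_eq[OF n(2), of l 0] by simp
  qed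
  then have "(delete_vertex V (und A) q)\<^sup>*\<^sup>* (vs ! 1) r"
    using temporal_path_delete_vertex_rtranclp[OF tp AV, of 1 "n - 1" q] ends' n(1) by (simp add: n_def)
  with n(3) ends'(1) show ?thesis
    by (auto intro: that)
qed

lemma oriented_tree_no_transit:
  assumes ot: "oriented_tree V A" and pq: "temp_path_from_to A lam p q"
    and qr: "temp_path_from_to A lam q r"
  shows "\<not> (delete_vertex V (und A) q)\<^sup>*\<^sup>* p r"
proof
  assume pr: "(delete_vertex V (und A) q)\<^sup>*\<^sup>* p r"
  have AV: "A \<subseteq> V \<times> V" and no_antiparallel: "\<And>u v. (u, v) \<in> A \<Longrightarrow> (v, u) \<notin> A"
    and tree: "is_tree V (und A)"
    using ot by (auto simp: oriented_tree_def)
  obtain x where xq: "(x, q) \<in> A" and px: "(delete_vertex V (und A) q)\<^sup>*\<^sup>* p x"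
    using temp_path_last_arc[OF AV pq] .
  obtain y where qy: "(q, y) \<in> A" and yr: "(delete_vertex V (und A) q)\<^sup>*\<^sup>* y r"
    using temp_path_first_arc[OF AV qr] .
  have "(delete_vertex V (und A) q)\<^sup>*\<^sup>* y x"
    using delete_vertex_rtranclp_sym[OF symp_und] px pr yr by (meson rtranclp_trans)
  moreover have "x \<noteq> y" and "q \<in> V"
    using xq qy no_antiparallel AV by auto
  ultimately show False
    using tree_delete_vertex_separates_neighbours[OF tree] xq qy by (auto simp: und_def)
qed

definition cyclic_nth :: "'a list \<Rightarrow> nat \<Rightarrow> 'a" where
  "cyclic_nth xs n = xs ! (n mod length xs)"

lemma cyclic_nth_add_length [simp]: "cyclic_nth xs (n + length xs) = cyclic_nth xs n"
  by (simp add: cyclic_nth_def)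

lemma cyclic_nth_in_set: "xs \<noteq> [] \<Longrightarrow> cyclic_nth xs n \<in> set xs"
  by (simp add: cyclic_nth_def)

lemma cyclic_nth_inj_window:
  assumes "distinct xs" and "a \<le> b" and "b < a + length xs"
    and "cyclic_nth xs a = cyclic_nth xs b"
  shows "a = b"
proof -
  have "length xs > 0"
    using assms(2,3) by linarith
  then have "b mod length xs = a mod length xs"
    using assms(4) nth_eq_iff_index_eq[OF assms(1), of "a mod length xs" "b mod length xs"]
    by (simp add: cyclic_nth_def)
  then have "length xs dvd b - a"
    using mod_eq_dvd_iff_nat[OF assms(2)] by simp
  moreover have "b - a < length xs"
    using assms(2,3) by simp
  ultimately have "b - a = 0"
    using nat_dvd_not_less by blast
  then show ?thesis
    using assms(2) by simp
qed

lemma is_cycle_cyclic_nth_adj: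
  assumes "is_cycle V E cs"
  shows "E (cyclic_nth cs n) (cyclic_nth cs (Suc n))"
proof -
  have "length cs > 0" and edges: "\<forall>i < length cs. E (cs ! i) (cs ! ((i + 1) mod length cs))"
    using assms by (auto simp: is_cycle_def)
  then show ?thesis
    using edges[rule_format, of "n mod length cs"] by (simp add: cyclic_nth_def mod_Suc_eq)
qed

lemma induced_cycle_cyclic_nth_adj:
  assumes "induced_cycle V E cs" and "E (cyclic_nth cs n) (cyclic_nth cs m)"
  shows "cyclic_nth cs m = cyclic_nth cs (Suc n) \<or> cyclic_nth cs n = cyclic_nth cs (Suc m)"
proof -
  have "length cs > 0" and induced: "\<forall>i j. i < length cs \<and> j < length cs \<and> E (cs ! i) (cs ! j) \<longrightarrow>
      j = (i + 1) mod length cs \<or> i = (j + 1) mod length cs"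
    using assms(1) by (auto simp: induced_cycle_def is_cycle_def)
  then have "m mod length cs = Suc n mod length cs \<or> n mod length cs = Suc m mod length cs"
    using assms(2) induced[rule_format, of "n mod length cs" "m mod length cs"]
    by (simp add: cyclic_nth_def mod_Suc_eq)
  then show ?thesis
    by (auto simp: cyclic_nth_def)
qed

lemma induced_cycle_detour:
  fixes cs :: "'v list" and i :: nat
  defines "q \<equiv> cyclic_nth cs (Suc i)"
  assumes cyc: "induced_cycle V E cs" and len: "length cs \<ge> 4"
    and edge_avoiding: "\<And>u v. E u v \<Longrightarrow> q \<noteq> u \<Longrightarrow> q \<noteq> v \<Longrightarrow> \<not> (E q u \<and> E q v) \<Longrightarrow> R\<^sup>*\<^sup>* u v"
  shows "R\<^sup>*\<^sup>* (cyclic_nth cs (Suc (Suc i))) (cyclic_nth cs i)"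
proof -
  let ?f = "cyclic_nth cs" and ?k = "length cs"
  have dist: "distinct cs"
    using cyc by (simp add: induced_cycle_def is_cycle_def)
  note window = cyclic_nth_inj_window[OF dist]
  have "(R\<^sup>*\<^sup>*)\<^sup>*\<^sup>* (?f (Suc (Suc i))) (?f (i + ?k))"
  proof (rule rtranclp_of_chain)
    show "Suc (Suc i) \<le> i + ?k"
      using len by simp
    fix l assume l: "Suc (Suc i) \<le> l" "l < i + ?k"
    have q_ne: "q \<noteq> ?f l" "q \<noteq> ?f (Suc l)"
      using window[of "Suc i" l] window[of "Suc i" "Suc l"] l unfolding q_def by fastforce+
    have "\<not> (E q (?f l) \<and> E q (?f (Suc l)))"
    proof
      assume adj: "E q (?f l) \<and> E q (?f (Suc l))"
      then have "?f l = ?f (Suc (Suc i)) \<or> q = ?f (Suc l)"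
        using induced_cycle_cyclic_nth_adj[OF cyc] unfolding q_def by blast
      then have "l = Suc (Suc i)"
        using window[of "Suc (Suc i)" l] l q_ne(2) by fastforce
      moreover have "?f (Suc l) = ?f (Suc (Suc i)) \<or> q = ?f (Suc (Suc l))"
        using adj induced_cycle_cyclic_nth_adj[OF cyc] unfolding q_def by blast
      ultimately have "?f (Suc (Suc (Suc i))) = ?f (Suc (Suc i)) \<or> ?f (Suc i) = ?f (i + 4)"
        unfolding q_def by (simp add: numeral_eq_Suc)
      then show False
        using window[of "Suc (Suc i)" "Suc (Suc (Suc i))"] window[of "Suc i" "i + 4"] len by fastforce
    qed
    moreover have "E (?f l) (?f (Suc l))"
      using cyc is_cycle_cyclic_nth_adj by (auto simp: induced_cycle_def)
    ultimately show "R\<^sup>*\<^sup>* (?f l) (?f (Suc l))"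
      using edge_avoiding q_ne by blast
  qed
  then show ?thesis
    by simp
qed

lemma odd_period_consecutive_eq:
  fixes d :: "nat \<Rightarrow> bool"
  assumes periodic: "\<And>n. d (n + k) = d n" and "odd k"
  obtains i where "d i = d (Suc i)"
proof -
  have "\<exists>i. d i = d (Suc i)"
  proof (rule ccontr)
    assume "\<nexists>i. d i = d (Suc i)"
    then have alternating: "d (Suc i) = (\<not> d i)" for i
      by blast
    have "d n = (d 0 = even n)" for n
      by (induction n) (simp_all add: alternating)
    from this[of k] show False
      using periodic[of 0] \<open>odd k\<close> by simp
  qed
  then show ?thesis
    using that by blast
qed

lemma odd_cycle_consecutive_same_direction:
  assumes cyc: "is_cycle V (conn_graph V A lam) cs" and odd: "odd (length cs)"
  obtains i where
    "temp_path_from_to A lam (cyclic_nth cs i) (cyclic_nth cs (Suc i)) \<and>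
     temp_path_from_to A lam (cyclic_nth cs (Suc i)) (cyclic_nth cs (Suc (Suc i))) \<or>
     temp_path_from_to A lam (cyclic_nth cs (Suc (Suc i))) (cyclic_nth cs (Suc i)) \<and>
     temp_path_from_to A lam (cyclic_nth cs (Suc i)) (cyclic_nth cs i)"
proof -
  let ?f = "cyclic_nth cs"
  define forward where "forward n \<longleftrightarrow> temp_path_from_to A lam (?f n) (?f (Suc n))" for n
  have "forward (n + length cs) = forward n" for n
    using cyclic_nth_add_length[of cs "Suc n"] by (simp add: forward_def)
  then obtain i where same: "forward i = forward (Suc i)"
    using odd_period_consecutive_eq odd by metis
  have "temporally_connected A lam (?f n) (?f (Suc n))" for n
    using is_cycle_cyclic_nth_adj[OF cyc] by (simp add: conn_graph_def)
  then show ?thesis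
    using that[of i] same by (auto simp: forward_def temporally_connected_def)
qed

theorem mainTheorem8:
  fixes V :: "'v set" and A :: "('v \<times> 'v) set" and lam :: "'v \<times> 'v \<Rightarrow> nat set" and tmax :: nat
  assumes "finite V"
    and "oriented_tree V A"
    and "\<forall>a\<in>A. lam a \<subseteq> {1..tmax}"
  shows "\<not> (\<exists>cs. odd_hole V (conn_graph V A lam) cs)"
proof
  assume "\<exists>cs. odd_hole V (conn_graph V A lam) cs"
  then obtain cs where cyc: "induced_cycle V (conn_graph V A lam) cs"
    and len: "length cs \<ge> 4" and odd: "odd (length cs)"
    by (auto simp: odd_hole_def)
  let ?f = "cyclic_nth cs"
  obtain i where transit:
    "temp_path_from_to A lam (?f i) (?f (Suc i)) \<and> temp_path_from_to A lam (?f (Suc i)) (?f (Suc (Suc i))) \<or>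
     temp_path_from_to A lam (?f (Suc (Suc i))) (?f (Suc i)) \<and> temp_path_from_to A lam (?f (Suc i)) (?f i)"
    using odd_cycle_consecutive_same_direction cyc odd unfolding induced_cycle_def by blast
  have "?f (Suc i) \<in> set cs"
    using len by (intro cyclic_nth_in_set) auto
  then have "?f (Suc i) \<in> V"
    using cyc by (auto simp: induced_cycle_def is_cycle_def)
  moreover have "A \<subseteq> V \<times> V"
    using assms(2) by (simp add: oriented_tree_def)
  ultimately have "(delete_vertex V (und A) (?f (Suc i)))\<^sup>*\<^sup>* (?f (Suc (Suc i))) (?f i)"
    by (intro induced_cycle_detour[OF cyc len] conn_graph_edge_avoiding_vertex)
  then show False
    using transit oriented_tree_no_transit[OF assms(2)] delete_vertex_rtranclp_sym[OF symp_und] by metis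
qed

end
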